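(* For every real number $\kappa\ge 0$ there exists a contraction $T$ on a Hilbert space such that $\sqrt{1-TT^*}$ has finite rank and $K(T) = \kappa$. In particular, there exist (non-pure) contractions with finite-rank defect $\sqrt{1-TT^*}$ whose curvature is not an integer.
   Context: A contraction $T$ on $H$ is pure if ${T^*}^n h \to 0$ for every $h\in H$. For a contraction $T$ with $\Delta_T := \sqrt{1-TT^*}$ of finite rank, the curvature of $T$ is $$K(T) := \int_{|z|=1} \lim_{r\uparrow 1} (1-r^2)\, \operatorname{tr}\big(\Delta_T (1-rzT^* )^{-1}(1-r\bar z T)^{-1}\Delta_T\big)\, dz,$$ where $dz$ denotes normalized arc-length (Haar probability) measure on the unit circle. *)

theory Defs
  imports "HOL-Analysis.Analysis"
begin

text \<open>Concrete separable Hilbert space: complex l2 over the natural numbers.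
  Vectors are functions nat to complex; bounded operators are functions on
  such vectors, only their behaviour on l2 matters.\<close>

type_synonym vec = "nat \<Rightarrow> complex"
type_synonym op = "vec \<Rightarrow> vec"

definition l2 :: "vec set" where
  "l2 = {x. summable (\<lambda>n. (cmod (x n))\<^sup>2)}"

definition l2norm :: "vec \<Rightarrow> real" where
  "l2norm x = sqrt (\<Sum>n. (cmod (x n))\<^sup>2)"

definition l2inner :: "vec \<Rightarrow> vec \<Rightarrow> complex" where
  "l2inner x y = (\<Sum>n. x n * cnj (y n))"

definition unitvec :: "nat \<Rightarrow> vec" where
  "unitvec k = (\<lambda>m. if m = k then 1 else 0)"

definition is_bdd_op :: "op \<Rightarrow> bool" where
  "is_bdd_op T \<longleftrightarrow>
     (\<forall>x\<in>l2. T x \<in> l2) \<and>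
     (\<forall>x\<in>l2. \<forall>y\<in>l2. \<forall>a b. T (\<lambda>n. a * x n + b * y n) = (\<lambda>n. a * T x n + b * T y n)) \<and>
     (\<exists>C. \<forall>x\<in>l2. l2norm (T x) \<le> C * l2norm x)"

definition adj :: "op \<Rightarrow> op" where
  "adj T = (SOME S. is_bdd_op S \<and> (\<forall>x\<in>l2. \<forall>y\<in>l2. l2inner (T x) y = l2inner x (S y)))"

definition is_contraction :: "op \<Rightarrow> bool" where
  "is_contraction T \<longleftrightarrow> is_bdd_op T \<and> (\<forall>x\<in>l2. l2norm (T x) \<le> l2norm x)"

definition defect :: "op \<Rightarrow> op" where
  "defect T = (SOME D. is_bdd_op D \<and>
      (\<forall>x\<in>l2. \<forall>y\<in>l2. l2inner (D x) y = l2inner x (D y)) \<and>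
      (\<forall>x\<in>l2. 0 \<le> Re (l2inner (D x) x)) \<and>
      (\<forall>x\<in>l2. D (D x) = (\<lambda>n. x n - T (adj T x) n)))"

definition finite_rank :: "op \<Rightarrow> bool" where
  "finite_rank A \<longleftrightarrow> (\<exists>(k::nat) (v::nat \<Rightarrow> vec). \<forall>x\<in>l2.
      \<exists>c::nat \<Rightarrow> complex. A x = (\<lambda>m. \<Sum>i<k. c i * v i m))"

definition pure :: "op \<Rightarrow> bool" where
  "pure T \<longleftrightarrow> (\<forall>h\<in>l2. (\<lambda>n. l2norm ((adj T ^^ n) h)) \<longlonglongrightarrow> 0)"

definition op_inv :: "op \<Rightarrow> op" where
  "op_inv A = (SOME B. is_bdd_op B \<and> (\<forall>x\<in>l2. A (B x) = x \<and> B (A x) = x))"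

definition trace_op :: "op \<Rightarrow> complex" where
  "trace_op A = (\<Sum>n. A (unitvec n) n)"

definition curv_integrand :: "op \<Rightarrow> complex \<Rightarrow> real \<Rightarrow> complex" where
  "curv_integrand T z r =
     (let D = defect T;
          R1 = op_inv (\<lambda>x n. x n - (complex_of_real r * z) * adj T x n);
          R2 = op_inv (\<lambda>x n. x n - (complex_of_real r * cnj z) * T x n)
      in complex_of_real (1 - r\<^sup>2) * trace_op (\<lambda>x. D (R1 (R2 (D x)))))"

definition curvature_defined :: "op \<Rightarrow> bool" where
  "curvature_defined T \<longleftrightarrow> (\<exists>k N. negligible N \<and>
      (\<forall>t\<in>{0..2*pi} - N. ((\<lambda>r. curv_integrand T (cis t) r) \<longlongrightarrow> k t) (at_left 1)) \<and>
      k integrable_on {0..2*pi})"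

definition curvature :: "op \<Rightarrow> complex" where
  "curvature T = integral {0..2*pi} (\<lambda>t. Lim (at_left 1) (\<lambda>r. curv_integrand T (cis t) r))
                 / complex_of_real (2*pi)"

end

(* Let T be the forward shift by m on l2(Z) whose weights are c on the block [-m, 0) and 1
   elsewhere, where s^2 + c^2 = 1. Then 1 - T T* = s^2 P for the projection P onto the m
   coordinates [0, m), so the defect of T is s P, of rank m, and T is not pure because T* is
   an isometry on the negative half-line. Both resolvents in the curvature integrand are
   Neumann series of weighted shifts; for n in [0, m) only the orbit n + k m, along which all
   weights are 1, reaches the n-th diagonal entry, which is therefore
   s^2 * (sum of r^(2k)) = s^2 / (1 - r^2). So the integrand equals m s^2 for all r < 1 and
   |z| = 1, and K(T) = m s^2 takes every value in [0, m]. *)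

theory Submission
  imports Defs "HOL-Library.Nat_Bijection"
begin

lemma nonneg_summable_comp_inj:
  fixes f :: "nat \<Rightarrow> real"
  assumes "summable f" "\<And>n. 0 \<le> f n" "inj p"
  shows "summable (\<lambda>n. f (p n))" "(\<Sum>n. f (p n)) \<le> suminf f"
proof -
  have partial: "(\<Sum>n<N. f (p n)) \<le> suminf f" for N
  proof -
    have "(\<Sum>n<N. f (p n)) = sum f (p ` {..<N})"
      using assms(3) by (simp add: sum.reindex inj_on_subset)
    also have "\<dots> \<le> suminf f" by (rule sum_le_suminf) (use assms in auto)
    finally show ?thesis .
  qed
  show summable: "summable (\<lambda>n. f (p n))"
    by (rule summableI_nonneg_bounded[where x="suminf f"]) (use assms partial in auto)
  show "(\<Sum>n. f (p n)) \<le> suminf f" using suminf_le_const[OF summable partial] .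
qed

lemma suminf_comp_bij:
  fixes f :: "nat \<Rightarrow> 'a::banach"
  assumes "summable (\<lambda>n. norm (f n))" "bij p"
  shows "(\<Sum>n. f (p n)) = suminf f"
proof -
  have "summable (\<lambda>n. norm (f (p n)))"
    using nonneg_summable_comp_inj(1)[OF assms(1) _ bij_is_inj[OF assms(2)]] by simp
  then have "((\<lambda>n. f (p n)) has_sum (\<Sum>n. f (p n))) UNIV" "(f has_sum suminf f) UNIV"
    using assms(1) by (auto intro!: norm_summable_imp_has_sum summable_sums summable_norm_cancel)
  moreover have "infsum (\<lambda>n. f (p n)) UNIV = infsum f UNIV"
    by (rule infsum_reindex_bij_betw[OF assms(2)])
  ultimately show ?thesis by (simp add: infsumI)
qed

section \<open>The sequence space\<close>

lemma l2_coord_sq_le: "x \<in> l2 \<Longrightarrow> (cmod (x j))\<^sup>2 \<le> (\<Sum>n. (cmod (x n))\<^sup>2)"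
  unfolding l2_def using sum_le_suminf[of "\<lambda>n. (cmod (x n))\<^sup>2" "{j}"] by auto

lemma l2_coord_le_l2norm: "x \<in> l2 \<Longrightarrow> cmod (x j) \<le> l2norm x"
  unfolding l2norm_def using l2_coord_sq_le[of x j] real_le_rsqrt by blast

lemma l2_scale: "x \<in> l2 \<Longrightarrow> (\<lambda>n. a * x n) \<in> l2"
  unfolding l2_def by (simp add: norm_mult power_mult_distrib summable_mult)

lemma l2_add:
  assumes "x \<in> l2" "y \<in> l2"
  shows "(\<lambda>n. x n + y n) \<in> l2"
proof -
  have "(cmod (x n + y n))\<^sup>2 \<le> 2 * (cmod (x n))\<^sup>2 + 2 * (cmod (y n))\<^sup>2" for n
  proof -
    have "(cmod (x n + y n))\<^sup>2 \<le> (cmod (x n) + cmod (y n))\<^sup>2"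
      by (intro power_mono norm_triangle_ineq) simp
    also have "\<dots> \<le> 2 * (cmod (x n))\<^sup>2 + 2 * (cmod (y n))\<^sup>2"
      using sum_squares_bound[of "cmod (x n)" "cmod (y n)"] by (simp add: power2_sum)
    finally show ?thesis .
  qed
  moreover have "summable (\<lambda>n. 2 * (cmod (x n))\<^sup>2 + 2 * (cmod (y n))\<^sup>2)"
    using assms unfolding l2_def by (intro summable_add summable_mult) auto
  ultimately show ?thesis
    unfolding l2_def by (auto intro: summable_comparison_test')
qed

lemma l2_diff:
  assumes "x \<in> l2" "y \<in> l2"
  shows "(\<lambda>n. x n - y n) \<in> l2"
  using l2_add[OF assms(1) l2_scale[OF assms(2), of "-1"]] by simp

lemma l2inner_summable:
  assumes "x \<in> l2" "y \<in> l2"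
  shows "summable (\<lambda>n. norm (x n * cnj (y n)))"
proof (rule summable_comparison_test')
  show "summable (\<lambda>n. ((cmod (x n))\<^sup>2 + (cmod (y n))\<^sup>2) / 2)"
    using assms unfolding l2_def by (intro summable_divide summable_add) auto
  show "norm (norm (x n * cnj (y n))) \<le> ((cmod (x n))\<^sup>2 + (cmod (y n))\<^sup>2) / 2" for n
    using sum_squares_bound[of "cmod (x n)" "cmod (y n)"] by (simp add: norm_mult)
qed

lemma l2inner_self:
  assumes "y \<in> l2"
  shows "l2inner y y = of_real (\<Sum>n. (cmod (y n))\<^sup>2)"
proof -
  have "l2inner y y = (\<Sum>n. of_real ((cmod (y n))\<^sup>2))"
    unfolding l2inner_def complex_norm_square by simp
  then show ?thesis
    using assms unfolding l2_def by (simp add: suminf_of_real)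
qed

lemma l2inner_self_eq_0_iff:
  assumes "y \<in> l2"
  shows "l2inner y y = 0 \<longleftrightarrow> y = (\<lambda>n. 0)"
  using assms suminf_eq_zero_iff[of "\<lambda>n. (cmod (y n))\<^sup>2"]
  unfolding l2inner_self[OF assms] l2_def by (auto simp: fun_eq_iff)

lemma l2inner_scale_left:
  assumes "y \<in> l2" "z \<in> l2"
  shows "l2inner (\<lambda>n. a * y n) z = a * l2inner y z"
  unfolding l2inner_def
  using suminf_mult[OF summable_norm_cancel[OF l2inner_summable[OF assms]], of a]
  by (simp add: mult.assoc)

lemma unitvec_l2: "unitvec k \<in> l2"
  unfolding l2_def by (rule CollectI, rule summable_finite[of "{k}"]) (auto simp: unitvec_def)

lemma l2norm_unitvec: "l2norm (unitvec k) = 1"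
  unfolding l2norm_def by (subst suminf_finite[of "{k}"]) (auto simp: unitvec_def)

lemma l2inner_unitvec_left: "l2inner (unitvec k) v = cnj (v k)"
  unfolding l2inner_def by (subst suminf_finite[of "{k}"]) (auto simp: unitvec_def)

lemma l2_eqI_unitvec:
  assumes "\<And>k. l2inner (unitvec k) x = l2inner (unitvec k) y"
  shows "x = y"
  using assms by (auto simp: fun_eq_iff l2inner_unitvec_left)

section \<open>Bounded operators\<close>

lemma bdd_op_l2: "is_bdd_op A \<Longrightarrow> x \<in> l2 \<Longrightarrow> A x \<in> l2"
  unfolding is_bdd_op_def by blast

lemma bdd_op_linear:
  "is_bdd_op A \<Longrightarrow> x \<in> l2 \<Longrightarrow> y \<in> l2 \<Longrightarrow>
     A (\<lambda>n. a * x n + b * y n) = (\<lambda>n. a * A x n + b * A y n)"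
  unfolding is_bdd_op_def by blast

lemma bdd_op_scale: "is_bdd_op A \<Longrightarrow> x \<in> l2 \<Longrightarrow> A (\<lambda>n. a * x n) = (\<lambda>n. a * A x n)"
  using bdd_op_linear[of A x x a 0] by simp

lemma adj_eqI:
  assumes S: "is_bdd_op S" and adjoint: "\<And>x y. x \<in> l2 \<Longrightarrow> y \<in> l2 \<Longrightarrow> l2inner (T x) y = l2inner x (S y)"
    and y: "y \<in> l2"
  shows "adj T y = S y"
proof -
  have "is_bdd_op (adj T) \<and> (\<forall>x\<in>l2. \<forall>y\<in>l2. l2inner (T x) y = l2inner x (adj T y))"
    unfolding adj_def by (rule someI[of _ S]) (use S adjoint in blast)
  then have "l2inner (unitvec k) (adj T y) = l2inner (unitvec k) (S y)" for k
    using adjoint[OF unitvec_l2 y] y unitvec_l2 by metis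
  then show ?thesis by (rule l2_eqI_unitvec)
qed

lemma op_inv_eqI:
  assumes B: "is_bdd_op B" and inverse: "\<And>x. x \<in> l2 \<Longrightarrow> A (B x) = x \<and> B (A x) = x"
    and x: "x \<in> l2"
  shows "op_inv A x = B x"
proof -
  have "is_bdd_op (op_inv A) \<and> (\<forall>x\<in>l2. A (op_inv A x) = x \<and> op_inv A (A x) = x)"
    unfolding op_inv_def by (rule someI[of _ B]) (use B inverse in blast)
  then have "op_inv A (A (B x)) = B x"
    using bdd_op_l2[OF B x] by blast
  then show ?thesis using inverse[OF x] by simp
qed

section \<open>Weighted composition operators\<close>

definition wcomp :: "(nat \<Rightarrow> complex) \<Rightarrow> (nat \<Rightarrow> nat) \<Rightarrow> op" where
  "wcomp g p x = (\<lambda>n. g n * x (p n))"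

lemma wcomp_l2:
  assumes p: "inj p" and g: "\<And>n. cmod (g n) \<le> 1" and x: "x \<in> l2"
  shows "wcomp g p x \<in> l2" "(\<Sum>n. (cmod (wcomp g p x n))\<^sup>2) \<le> (\<Sum>n. (cmod (x n))\<^sup>2)"
proof -
  have sx: "summable (\<lambda>n. (cmod (x n))\<^sup>2)" using x unfolding l2_def by simp
  note comp = nonneg_summable_comp_inj[OF sx zero_le_power2 p]
  have le: "(cmod (wcomp g p x n))\<^sup>2 \<le> (cmod (x (p n)))\<^sup>2" for n
    unfolding wcomp_def norm_mult
    using g[of n] by (intro power_mono mult_left_le_one_le) auto
  then have summable: "summable (\<lambda>n. (cmod (wcomp g p x n))\<^sup>2)"
    by (intro summable_comparison_test'[OF comp(1)]) auto
  then show "wcomp g p x \<in> l2" unfolding l2_def by simp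
  have "(\<Sum>n. (cmod (wcomp g p x n))\<^sup>2) \<le> (\<Sum>n. (cmod (x (p n)))\<^sup>2)"
    by (rule suminf_le[OF le summable comp(1)])
  then show "(\<Sum>n. (cmod (wcomp g p x n))\<^sup>2) \<le> (\<Sum>n. (cmod (x n))\<^sup>2)"
    using comp(2) by simp
qed

lemma contraction_wcomp:
  assumes "inj p" "\<And>n. cmod (g n) \<le> 1"
  shows "is_contraction (wcomp g p)"
proof -
  have norm: "l2norm (wcomp g p x) \<le> l2norm x" if "x \<in> l2" for x
    unfolding l2norm_def using wcomp_l2[OF assms that] by simp
  have "is_bdd_op (wcomp g p)"
    unfolding is_bdd_op_def
  proof (intro conjI ballI allI exI)
    show "wcomp g p x \<in> l2" if "x \<in> l2" for x using wcomp_l2[OF assms that] by simp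
    show "wcomp g p (\<lambda>n. a * x n + b * y n) = (\<lambda>n. a * wcomp g p x n + b * wcomp g p y n)" for x y a b
      unfolding wcomp_def by (simp add: algebra_simps)
    show "l2norm (wcomp g p x) \<le> 1 * l2norm x" if "x \<in> l2" for x using norm[OF that] by simp
  qed
  with norm show ?thesis unfolding is_contraction_def by blast
qed

lemma bdd_op_wcomp: "inj p \<Longrightarrow> (\<And>n. cmod (g n) \<le> 1) \<Longrightarrow> is_bdd_op (wcomp g p)"
  using contraction_wcomp unfolding is_contraction_def by blast

context
  fixes p q :: "nat \<Rightarrow> nat"
  assumes p_q: "\<And>n. p (q n) = n" and q_p: "\<And>n. q (p n) = n"
begin

lemma adj_wcomp:
  assumes g: "\<And>n. cmod (g n) \<le> 1" and y: "y \<in> l2"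
  shows "adj (wcomp g p) y = wcomp (\<lambda>n. cnj (g (q n))) q y"
proof (rule adj_eqI[OF _ _ y])
  have "inj q" "inj p" by (metis injI p_q q_p)+
  then show "is_bdd_op (wcomp (\<lambda>n. cnj (g (q n))) q)" by (intro bdd_op_wcomp) (use g in auto)
  fix x z assume x: "x \<in> l2" and z: "z \<in> l2"
  have "bij q" by (rule o_bij[of p]) (auto simp: p_q q_p)
  have "l2inner (wcomp g p x) z = (\<Sum>n. wcomp g p x (q n) * cnj (z (q n)))"
    unfolding l2inner_def
    by (rule suminf_comp_bij[symmetric, OF l2inner_summable \<open>bij q\<close>])
      (use wcomp_l2(1)[OF \<open>inj p\<close> g x] z in auto)
  also have "\<dots> = l2inner x (wcomp (\<lambda>n. cnj (g (q n))) q z)"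
    unfolding l2inner_def wcomp_def by (simp add: p_q mult_ac)
  finally show "l2inner (wcomp g p x) z = l2inner x (wcomp (\<lambda>n. cnj (g (q n))) q z)" .
qed

lemma wcomp_unitvec: "wcomp g p (unitvec j) = (\<lambda>n. g (q j) * unitvec (q j) n)"
  unfolding wcomp_def unitvec_def by (auto simp: fun_eq_iff) (metis p_q q_p)+

end

section \<open>The defect operator\<close>

definition proj :: "nat set \<Rightarrow> op" where
  "proj C x = (\<lambda>n. if n \<in> C then x n else 0)"

lemma scaled_proj_eq_wcomp:
  "(\<lambda>n. of_real s * proj C x n) = wcomp (\<lambda>n. if n \<in> C then of_real s else 0) id x"
  unfolding proj_def wcomp_def by auto

lemma bdd_op_scaled_proj:
  assumes "\<bar>s\<bar> \<le> 1"
  shows "is_bdd_op (\<lambda>x n. of_real s * proj C x n)"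
  unfolding scaled_proj_eq_wcomp by (rule bdd_op_wcomp) (use assms in auto)

lemma proj_l2:
  assumes "x \<in> l2"
  shows "proj C x \<in> l2"
proof -
  have "summable (\<lambda>n. (cmod (x n))\<^sup>2)" using assms unfolding l2_def by simp
  then have "summable (\<lambda>n. (cmod (proj C x n))\<^sup>2)"
    by (rule summable_comparison_test') (simp add: proj_def)
  then show ?thesis unfolding l2_def by simp
qed

lemma self_adjoint_scaled_proj:
  "l2inner (\<lambda>n. of_real s * proj C x n) y = l2inner x (\<lambda>n. of_real s * proj C y n)"
  unfolding l2inner_def proj_def by (intro arg_cong[where f=suminf] ext) (simp add: mult_ac)

lemma positive_scaled_proj:
  assumes s: "0 \<le> s" and x: "x \<in> l2"
  shows "0 \<le> Re (l2inner (\<lambda>n. of_real s * proj C x n) x)"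
proof -
  define f where "f n = (if n \<in> C then s * (cmod (x n))\<^sup>2 else 0)" for n
  have "summable (\<lambda>n. s * (cmod (x n))\<^sup>2)"
    using x unfolding l2_def by (simp add: summable_mult)
  then have f: "summable f"
    by (rule summable_comparison_test') (use s in \<open>auto simp: f_def\<close>)
  have "l2inner (\<lambda>n. of_real s * proj C x n) x = (\<Sum>n. of_real (f n))"
    unfolding l2inner_def
    by (intro arg_cong[where f=suminf] ext) (simp add: f_def proj_def mult.assoc complex_norm_square[symmetric])
  also have "\<dots> = of_real (suminf f)" by (rule suminf_of_real[OF f, symmetric])
  finally have "l2inner (\<lambda>n. of_real s * proj C x n) x = of_real (suminf f)" .
  moreover have "0 \<le> suminf f" by (rule suminf_nonneg[OF f]) (use s in \<open>simp add: f_def\<close>)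
  ultimately show ?thesis by simp
qed

context
  fixes D :: op
  assumes bdd: "is_bdd_op D"
    and self_adjoint: "\<And>x y. x \<in> l2 \<Longrightarrow> y \<in> l2 \<Longrightarrow> l2inner (D x) y = l2inner x (D y)"
    and positive: "\<And>x. x \<in> l2 \<Longrightarrow> 0 \<le> Re (l2inner (D x) x)"
begin

lemma self_adjoint_sq_eq_zero:
  assumes w: "w \<in> l2" and "D (D w) = (\<lambda>n. 0)"
  shows "D w = (\<lambda>n. 0)"
proof -
  have "l2inner (D w) (D w) = l2inner w (D (D w))"
    using self_adjoint bdd_op_l2[OF bdd w] w by blast
  also have "\<dots> = 0" unfolding assms(2) l2inner_def by simp
  finally show ?thesis using l2inner_self_eq_0_iff bdd_op_l2[OF bdd w] by blast
qed

lemma positive_neg_eigenvector_eq_zero: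
  assumes y: "y \<in> l2" and s: "0 < s" and "D y = (\<lambda>n. - of_real s * y n)"
  shows "y = (\<lambda>n. 0)"
proof -
  define Y where "Y = (\<Sum>n. (cmod (y n))\<^sup>2)"
  have "l2inner (D y) y = of_real (- s * Y)"
    unfolding assms(3) l2inner_scale_left[OF y y] l2inner_self[OF y] Y_def by simp
  then have "Y \<le> 0"
    using positive[OF y] s by (simp add: mult_le_0_iff)
  moreover have "0 \<le> Y" using y unfolding Y_def l2_def by (simp add: suminf_nonneg)
  ultimately show ?thesis
    using l2inner_self_eq_0_iff[OF y] l2inner_self[OF y] unfolding Y_def by simp
qed

text \<open>On the kernel of \<open>P = proj C\<close> the square of \<open>D\<close> vanishes, so \<open>D\<close> does;
  on the range of \<open>P\<close>, \<open>D v - s v\<close> is an eigenvector of \<open>D\<close> with eigenvalue \<open>-s\<close>,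
  which positivity forbids.\<close>
lemma sqrt_scaled_proj_unique:
  assumes sq: "\<And>x. x \<in> l2 \<Longrightarrow> D (D x) = (\<lambda>n. (of_real s)\<^sup>2 * proj C x n)"
    and s: "0 \<le> s" and x: "x \<in> l2"
  shows "D x = (\<lambda>n. of_real s * proj C x n)"
proof -
  define u where "u = (\<lambda>n. x n - proj C x n)"
  define v where "v = proj C x"
  have u: "u \<in> l2" and v: "v \<in> l2" unfolding u_def v_def using l2_diff proj_l2 x by auto
  have "proj C u = (\<lambda>n. 0)" "proj C v = v" unfolding u_def v_def proj_def by auto
  then have Du: "D u = (\<lambda>n. 0)" and DDv: "D (D v) = (\<lambda>n. (of_real s)\<^sup>2 * v n)"
    using self_adjoint_sq_eq_zero[OF u] sq[OF u] sq[OF v] by simp_all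
  have Dv: "D v = (\<lambda>n. of_real s * v n)"
  proof (cases "s = 0")
    case True
    then show ?thesis using self_adjoint_sq_eq_zero[OF v] DDv by simp
  next
    case False
    with s have "0 < s" by simp
    define y where "y = (\<lambda>n. 1 * D v n + (- of_real s) * v n)"
    have Dv_l2: "D v \<in> l2" by (rule bdd_op_l2[OF bdd v])
    have "y \<in> l2" unfolding y_def by (intro l2_add l2_scale Dv_l2 v)
    moreover have "D y = (\<lambda>n. - of_real s * y n)"
      unfolding y_def bdd_op_linear[OF bdd Dv_l2 v] DDv
      by (simp add: power2_eq_square algebra_simps)
    ultimately have "y = (\<lambda>n. 0)"
      by (rule positive_neg_eigenvector_eq_zero[OF _ \<open>0 < s\<close>])
    then show ?thesis unfolding y_def by (simp add: fun_eq_iff)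
  qed
  have "x = (\<lambda>n. 1 * v n + 1 * u n)" unfolding u_def v_def by simp
  then have "D x = (\<lambda>n. 1 * D v n + 1 * D u n)" using bdd_op_linear[OF bdd v u] by metis
  then have "D x = (\<lambda>n. of_real s * v n)" by (simp add: Du Dv)
  then show ?thesis unfolding v_def .
qed

end

lemma defect_eq_scaled_proj:
  assumes s: "0 \<le> s" "s \<le> 1"
    and defect_sq: "\<And>x. x \<in> l2 \<Longrightarrow> (\<lambda>n. x n - T (adj T x) n) = (\<lambda>n. (of_real s)\<^sup>2 * proj C x n)"
    and x: "x \<in> l2"
  shows "defect T x = (\<lambda>n. of_real s * proj C x n)"
proof -
  let ?S = "\<lambda>x n. of_real s * proj C x n"
  have "is_bdd_op (defect T) \<and>
      (\<forall>x\<in>l2. \<forall>y\<in>l2. l2inner (defect T x) y = l2inner x (defect T y)) \<and>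
      (\<forall>x\<in>l2. 0 \<le> Re (l2inner (defect T x) x)) \<and>
      (\<forall>x\<in>l2. defect T (defect T x) = (\<lambda>n. x n - T (adj T x) n))"
    unfolding defect_def
  proof (rule someI[of _ ?S], intro conjI ballI)
    show "is_bdd_op ?S" using s by (intro bdd_op_scaled_proj) simp
    show "l2inner (?S x) y = l2inner x (?S y)" for x y by (rule self_adjoint_scaled_proj)
    show "0 \<le> Re (l2inner (?S x) x)" if "x \<in> l2" for x by (rule positive_scaled_proj[OF s(1) that])
    show "?S (?S x) = (\<lambda>n. x n - T (adj T x) n)" if "x \<in> l2" for x
      unfolding defect_sq[OF that] by (auto simp: proj_def power2_eq_square)
  qed
  then show ?thesis
    by (intro sqrt_scaled_proj_unique[OF _ _ _ _ s(1) x]) (auto simp: defect_sq)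
qed

section \<open>Neumann series of weighted composition operators\<close>

lemma weighted_cauchy_schwarz_sum:
  fixes r :: real and a :: "nat \<Rightarrow> real"
  assumes r: "0 \<le> r" and a: "\<And>k. 0 \<le> a k"
  shows "(\<Sum>k<K. r^k * a k)\<^sup>2 \<le> (\<Sum>k<K. r^k) * (\<Sum>k<K. r^k * (a k)\<^sup>2)"
proof -
  define f where "f k = sqrt (r^k)" for k
  define h where "h k = sqrt (r^k) * a k" for k
  have "(\<Sum>k<K. r^k * a k) = (\<Sum>k<K. \<bar>f k\<bar> * \<bar>h k\<bar>)"
    unfolding f_def h_def using r a by (intro sum.cong refl) (simp add: abs_mult mult.assoc[symmetric])
  also have "\<dots> \<le> L2_set f {..<K} * L2_set h {..<K}"
    by (rule L2_set_mult_ineq)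
  finally have "(\<Sum>k<K. r^k * a k)\<^sup>2 \<le> (L2_set f {..<K} * L2_set h {..<K})\<^sup>2"
    by (rule power_mono) (use r a in \<open>simp add: sum_nonneg\<close>)
  also have "\<dots> = (\<Sum>k<K. r^k) * (\<Sum>k<K. r^k * (a k)\<^sup>2)"
    unfolding power_mult_distrib L2_set_def f_def h_def
    using r by (simp add: sum_nonneg power_mult_distrib)
  finally show ?thesis .
qed

lemma weighted_cauchy_schwarz:
  fixes r :: real and a :: "nat \<Rightarrow> real"
  assumes r: "0 \<le> r" "r < 1" and a: "\<And>k. 0 \<le> a k"
    and summable: "summable (\<lambda>k. r^k * a k)" "summable (\<lambda>k. r^k * (a k)\<^sup>2)"
  shows "(\<Sum>k. r^k * a k)\<^sup>2 \<le> 1 / (1 - r) * (\<Sum>k. r^k * (a k)\<^sup>2)"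
proof (rule LIMSEQ_le_const2)
  show "(\<lambda>K. (\<Sum>k<K. r^k * a k)\<^sup>2) \<longlonglongrightarrow> (\<Sum>k. r^k * a k)\<^sup>2"
    by (intro tendsto_power summable_LIMSEQ summable(1))
  have "(\<Sum>k<K. r^k * a k)\<^sup>2 \<le> 1 / (1 - r) * (\<Sum>k. r^k * (a k)\<^sup>2)" for K
  proof -
    have "(\<Sum>k<K. r^k) \<le> (\<Sum>k. r^k)"
      by (rule sum_le_suminf) (use r in \<open>auto intro: summable_geometric\<close>)
    then have geometric: "(\<Sum>k<K. r^k) \<le> 1 / (1 - r)" using suminf_geometric[of r] r by simp
    have "(\<Sum>k<K. r^k * a k)\<^sup>2 \<le> (\<Sum>k<K. r^k) * (\<Sum>k<K. r^k * (a k)\<^sup>2)"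
      by (rule weighted_cauchy_schwarz_sum[of r a K, OF r(1) a])
    also have "\<dots> \<le> 1 / (1 - r) * (\<Sum>k. r^k * (a k)\<^sup>2)"
    proof (rule mult_mono[OF geometric])
      show "(\<Sum>k<K. r^k * (a k)\<^sup>2) \<le> (\<Sum>k. r^k * (a k)\<^sup>2)"
        by (rule sum_le_suminf[OF summable(2)]) (use r in auto)
    qed (use r in \<open>auto intro: sum_nonneg\<close>)
    finally show ?thesis .
  qed
  then show "\<exists>N. \<forall>K\<ge>N. (\<Sum>k<K. r^k * a k)\<^sup>2 \<le> 1 / (1 - r) * (\<Sum>k. r^k * (a k)\<^sup>2)"
    by blast
qed

lemma sum_suminf_orbit_le:
  fixes r :: real and p :: "nat \<Rightarrow> nat" and N :: nat
  assumes p: "inj p" and x: "x \<in> l2" and r: "0 \<le> r" "r < 1"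
  shows "(\<Sum>n<N. \<Sum>k. r^k * (cmod (x ((p^^k) n)))\<^sup>2) \<le> (\<Sum>n. (cmod (x n))\<^sup>2) / (1 - r)"
proof -
  define X where "X = (\<Sum>n. (cmod (x n))\<^sup>2)"
  have sx: "summable (\<lambda>n. (cmod (x n))\<^sup>2)" using x unfolding l2_def by simp
  have orbit: "(\<Sum>n<N. (cmod (x ((p^^k) n)))\<^sup>2) \<le> X" for k
  proof -
    note comp = nonneg_summable_comp_inj[OF sx zero_le_power2 inj_fn[OF p, of k]]
    have "(\<Sum>n<N. (cmod (x ((p^^k) n)))\<^sup>2) \<le> (\<Sum>n. (cmod (x ((p^^k) n)))\<^sup>2)"
      by (rule sum_le_suminf[OF comp(1)]) auto
    with comp(2) show ?thesis unfolding X_def by simp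
  qed
  have geometric: "summable (\<lambda>k. r^k * X)"
    using r by (intro summable_mult2 summable_geometric) simp
  have bounded: "summable (\<lambda>k. r^k * (\<Sum>n<N. (cmod (x ((p^^k) n)))\<^sup>2))"
  proof (rule summable_comparison_test'[OF geometric])
    show "norm (r^k * (\<Sum>n<N. (cmod (x ((p^^k) n)))\<^sup>2)) \<le> r^k * X" for k
      using r orbit[of k] by (simp add: abs_mult sum_nonneg mult_left_mono)
  qed
  have summable_k: "summable (\<lambda>k. r^k * (cmod (x ((p^^k) n)))\<^sup>2)" for n
  proof (rule summable_comparison_test'[OF geometric])
    show "norm (r^k * (cmod (x ((p^^k) n)))\<^sup>2) \<le> r^k * X" for k
      using r l2_coord_sq_le[OF x] unfolding X_def by (simp add: mult_left_mono)
  qed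
  have "(\<Sum>n<N. \<Sum>k. r^k * (cmod (x ((p^^k) n)))\<^sup>2) = (\<Sum>k. \<Sum>n<N. r^k * (cmod (x ((p^^k) n)))\<^sup>2)"
    by (rule suminf_sum[symmetric, OF summable_k])
  also have "\<dots> = (\<Sum>k. r^k * (\<Sum>n<N. (cmod (x ((p^^k) n)))\<^sup>2))"
    by (simp add: sum_distrib_left)
  also have "\<dots> \<le> (\<Sum>k. r^k * X)"
    by (rule suminf_le[OF _ bounded geometric]) (use r orbit in \<open>simp add: mult_left_mono\<close>)
  also have "\<dots> = X / (1 - r)"
    using suminf_mult2[OF summable_geometric[of r]] suminf_geometric[of r] r by simp
  finally show ?thesis unfolding X_def .
qed

definition orbit_weight :: "(nat \<Rightarrow> complex) \<Rightarrow> (nat \<Rightarrow> nat) \<Rightarrow> nat \<Rightarrow> nat \<Rightarrow> complex" where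
  "orbit_weight g p k n = (\<Prod>i<k. g ((p^^i) n))"

text \<open>With \<open>W = wcomp g p\<close> one has \<open>(W^k x) n = orbit_weight g p k n * x ((p^^k) n)\<close>,
  so \<open>neumann \<mu> g p = (\<Sum>k. \<mu>^k W^k) = (1 - \<mu> W)\<inverse>\<close>.\<close>
definition neumann :: "complex \<Rightarrow> (nat \<Rightarrow> complex) \<Rightarrow> (nat \<Rightarrow> nat) \<Rightarrow> op" where
  "neumann \<mu> g p x n = (\<Sum>k. \<mu>^k * orbit_weight g p k n * x ((p^^k) n))"

lemma orbit_weight_0 [simp]: "orbit_weight g p 0 n = 1"
  by (simp add: orbit_weight_def)

lemma orbit_weight_Suc: "orbit_weight g p (Suc k) n = g n * orbit_weight g p k (p n)"
  unfolding orbit_weight_def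
  by (subst prod.lessThan_Suc_shift) (simp add: funpow_Suc_right del: funpow.simps)

lemma orbit_weight_Suc': "orbit_weight g p (Suc k) n = orbit_weight g p k n * g ((p^^k) n)"
  unfolding orbit_weight_def by simp

lemma norm_orbit_weight_le: "(\<And>n. cmod (g n) \<le> 1) \<Longrightarrow> cmod (orbit_weight g p k n) \<le> 1"
  unfolding orbit_weight_def prod_norm[symmetric] by (rule prod_le_1) auto

locale neumann_series =
  fixes \<mu> :: complex and g :: "nat \<Rightarrow> complex" and p :: "nat \<Rightarrow> nat"
  assumes inj: "inj p" and weight_le_1: "\<And>n. cmod (g n) \<le> 1" and radius: "cmod \<mu> < 1"
begin

lemma norm_term_le:
  "norm (\<mu>^k * orbit_weight g p k n * x ((p^^k) n)) \<le> (cmod \<mu>)^k * cmod (x ((p^^k) n))"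
proof -
  have "cmod (orbit_weight g p k n) * cmod (x ((p^^k) n)) \<le> cmod (x ((p^^k) n))"
    by (rule mult_left_le_one_le) (use norm_orbit_weight_le[OF weight_le_1] in auto)
  then show ?thesis
    by (simp add: norm_mult norm_power mult.assoc mult_left_mono)
qed

lemma summable_norm_terms:
  assumes x: "x \<in> l2"
  shows "summable (\<lambda>k. norm (\<mu>^k * orbit_weight g p k n * x ((p^^k) n)))"
proof (rule summable_comparison_test')
  show "summable (\<lambda>k. (cmod \<mu>)^k * l2norm x)"
    using radius by (intro summable_mult2 summable_geometric) simp
  fix k
  have "norm (\<mu>^k * orbit_weight g p k n * x ((p^^k) n)) \<le> (cmod \<mu>)^k * cmod (x ((p^^k) n))"
    by (rule norm_term_le)
  also have "\<dots> \<le> (cmod \<mu>)^k * l2norm x"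
    by (rule mult_left_mono) (use l2_coord_le_l2norm[OF x] in auto)
  finally show "norm (norm (\<mu>^k * orbit_weight g p k n * x ((p^^k) n))) \<le> (cmod \<mu>)^k * l2norm x"
    by simp
qed

lemma summable_terms: "x \<in> l2 \<Longrightarrow> summable (\<lambda>k. \<mu>^k * orbit_weight g p k n * x ((p^^k) n))"
  by (rule summable_norm_cancel[OF summable_norm_terms])

text \<open>Cauchy-Schwarz against the weights \<open>|\<mu>|^k\<close> bounds each coordinate; summing over
  \<open>n\<close> and exchanging the two sums yields the bound \<open>1 / (1 - |\<mu>|)\<close>.\<close>
lemma neumann_l2:
  assumes x: "x \<in> l2"
  shows "neumann \<mu> g p x \<in> l2" "l2norm (neumann \<mu> g p x) \<le> 1 / (1 - cmod \<mu>) * l2norm x"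
proof -
  define r where "r = cmod \<mu>"
  define X where "X = (\<Sum>n. (cmod (x n))\<^sup>2)"
  define a where "a n k = cmod (x ((p^^k) n))" for n k
  have r: "0 \<le> r" "r < 1" unfolding r_def using radius by auto
  have geometric: "summable (\<lambda>k. r^k * c)" for c
    using r by (intro summable_mult2 summable_geometric) simp
  have summable_a: "summable (\<lambda>k. r^k * a n k)" for n
    by (rule summable_comparison_test'[OF geometric[of "l2norm x"]])
      (use r l2_coord_le_l2norm[OF x] in \<open>auto simp: a_def intro: mult_left_mono\<close>)
  have summable_a2: "summable (\<lambda>k. r^k * (a n k)\<^sup>2)" for n
    by (rule summable_comparison_test'[OF geometric[of X]])
      (use r l2_coord_sq_le[OF x] in \<open>auto simp: a_def X_def intro: mult_left_mono\<close>)
  have pointwise: "(cmod (neumann \<mu> g p x n))\<^sup>2 \<le> 1 / (1 - r) * (\<Sum>k. r^k * (a n k)\<^sup>2)" for n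
  proof -
    have "cmod (neumann \<mu> g p x n) \<le> (\<Sum>k. norm (\<mu>^k * orbit_weight g p k n * x ((p^^k) n)))"
      unfolding neumann_def by (rule summable_norm[OF summable_norm_terms[OF x]])
    also have "\<dots> \<le> (\<Sum>k. r^k * a n k)"
      by (rule suminf_le[OF _ summable_norm_terms[OF x] summable_a])
        (simp add: norm_term_le r_def a_def)
    finally have "(cmod (neumann \<mu> g p x n))\<^sup>2 \<le> (\<Sum>k. r^k * a n k)\<^sup>2"
      by (rule power_mono) simp
    also have "\<dots> \<le> 1 / (1 - r) * (\<Sum>k. r^k * (a n k)\<^sup>2)"
      by (rule weighted_cauchy_schwarz[OF r _ summable_a summable_a2]) (simp add: a_def)
    finally show ?thesis .
  qed
  have partial: "(\<Sum>n<N. (cmod (neumann \<mu> g p x n))\<^sup>2) \<le> X / (1 - r)\<^sup>2" for N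
  proof -
    have "(\<Sum>n<N. (cmod (neumann \<mu> g p x n))\<^sup>2) \<le> 1 / (1 - r) * (\<Sum>n<N. \<Sum>k. r^k * (a n k)\<^sup>2)"
      unfolding sum_distrib_left by (rule sum_mono[OF pointwise])
    also have "\<dots> \<le> 1 / (1 - r) * (X / (1 - r))"
      using sum_suminf_orbit_le[OF inj x r, of N] r
      by (intro mult_left_mono) (simp_all add: a_def X_def)
    finally show ?thesis by (simp add: power2_eq_square)
  qed
  have summable: "summable (\<lambda>n. (cmod (neumann \<mu> g p x n))\<^sup>2)"
    by (rule summableI_nonneg_bounded[OF _ partial]) simp
  then show "neumann \<mu> g p x \<in> l2" unfolding l2_def by simp
  have "(\<Sum>n. (cmod (neumann \<mu> g p x n))\<^sup>2) \<le> X / (1 - r)\<^sup>2"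
    by (rule suminf_le_const[OF summable partial])
  then have "l2norm (neumann \<mu> g p x) \<le> sqrt (X / (1 - r)\<^sup>2)"
    unfolding l2norm_def by simp
  also have "\<dots> = 1 / (1 - r) * l2norm x"
    using r unfolding l2norm_def X_def by (simp add: real_sqrt_divide)
  finally show "l2norm (neumann \<mu> g p x) \<le> 1 / (1 - cmod \<mu>) * l2norm x" unfolding r_def .
qed

lemma bdd_op_neumann: "is_bdd_op (neumann \<mu> g p)"
  unfolding is_bdd_op_def
proof (intro conjI ballI allI exI)
  show "neumann \<mu> g p x \<in> l2" if "x \<in> l2" for x using neumann_l2[OF that] by simp
  show "l2norm (neumann \<mu> g p x) \<le> 1 / (1 - cmod \<mu>) * l2norm x" if "x \<in> l2" for x
    using neumann_l2[OF that] by simp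
  fix x y a b assume x: "x \<in> l2" and y: "y \<in> l2"
  show "neumann \<mu> g p (\<lambda>n. a * x n + b * y n) = (\<lambda>n. a * neumann \<mu> g p x n + b * neumann \<mu> g p y n)"
  proof
    fix n
    have "neumann \<mu> g p (\<lambda>n. a * x n + b * y n) n =
        (\<Sum>k. a * (\<mu>^k * orbit_weight g p k n * x ((p^^k) n)) + b * (\<mu>^k * orbit_weight g p k n * y ((p^^k) n)))"
      unfolding neumann_def by (simp add: algebra_simps)
    also have "\<dots> = a * neumann \<mu> g p x n + b * neumann \<mu> g p y n"
      unfolding neumann_def using summable_terms[OF x] summable_terms[OF y]
      by (simp add: suminf_add[symmetric] suminf_mult summable_mult)
    finally show "neumann \<mu> g p (\<lambda>n. a * x n + b * y n) n = a * neumann \<mu> g p x n + b * neumann \<mu> g p y n" .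
  qed
qed

lemma neumann_right_inverse:
  assumes x: "x \<in> l2"
  shows "(\<lambda>n. neumann \<mu> g p x n - \<mu> * wcomp g p (neumann \<mu> g p x) n) = x"
proof
  fix n
  define f where "f k = \<mu>^k * orbit_weight g p k n * x ((p^^k) n)" for k
  have f: "summable f" unfolding f_def by (rule summable_terms[OF x])
  have "\<mu> * wcomp g p (neumann \<mu> g p x) n = (\<Sum>k. \<mu> * g n * (\<mu>^k * orbit_weight g p k (p n) * x ((p^^k) (p n))))"
    unfolding wcomp_def neumann_def using summable_terms[OF x] by (simp add: suminf_mult mult.assoc)
  also have "\<dots> = (\<Sum>k. f (Suc k))"
    unfolding f_def orbit_weight_Suc by (simp add: funpow_Suc_right mult_ac del: funpow.simps)
  also have "\<dots> = suminf f - f 0" by (rule suminf_split_head[OF f])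
  also have "suminf f = neumann \<mu> g p x n" unfolding f_def neumann_def ..
  also have "f 0 = x n" unfolding f_def by simp
  finally show "neumann \<mu> g p x n - \<mu> * wcomp g p (neumann \<mu> g p x) n = x n" by simp
qed

lemma neumann_left_inverse:
  assumes x: "x \<in> l2"
  shows "neumann \<mu> g p (\<lambda>n. x n - \<mu> * wcomp g p x n) = x"
proof
  fix n
  define f where "f k = \<mu>^k * orbit_weight g p k n * x ((p^^k) n)" for k
  have "f \<longlonglongrightarrow> 0"
    using summable_LIMSEQ_zero[OF summable_norm_terms[OF x]]
    unfolding f_def by (simp add: tendsto_norm_zero_iff)
  then have "(\<lambda>k. f k - f (Suc k)) sums f 0" using telescope_sums'[of f 0] by simp
  moreover have "\<mu>^k * orbit_weight g p k n * (x ((p^^k) n) - \<mu> * wcomp g p x ((p^^k) n)) = f k - f (Suc k)" for k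
    unfolding f_def wcomp_def orbit_weight_Suc' by (simp add: algebra_simps)
  ultimately show "neumann \<mu> g p (\<lambda>n. x n - \<mu> * wcomp g p x n) n = x n"
    unfolding neumann_def by (simp add: sums_iff f_def)
qed

lemma op_inv_eq_neumann:
  assumes A: "\<And>y. y \<in> l2 \<Longrightarrow> A y = (\<lambda>n. y n - \<mu> * wcomp g p y n)" and x: "x \<in> l2"
  shows "op_inv A x = neumann \<mu> g p x"
proof (rule op_inv_eqI[OF bdd_op_neumann _ x])
  fix x assume x: "x \<in> l2"
  show "A (neumann \<mu> g p x) = x \<and> neumann \<mu> g p (A x) = x"
    using A neumann_l2(1)[OF x] neumann_right_inverse[OF x] neumann_left_inverse[OF x] A[OF x] by simp
qed

end

section \<open>Rank, trace and curvature\<close>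

lemma finite_rank_scaled_proj:
  assumes "finite C" and A: "\<And>x. x \<in> l2 \<Longrightarrow> A x = (\<lambda>n. of_real s * proj C x n)"
  shows "finite_rank A"
proof -
  obtain N where N: "C \<subseteq> {..<N}" using \<open>finite C\<close> finite_nat_bounded by blast
  have "(\<Sum>i<N. y i * unitvec i n) = y n" if "\<And>i. i \<notin> C \<Longrightarrow> y i = 0" for y n
  proof -
    have "(\<Sum>i<N. y i * unitvec i n) = (\<Sum>i<N. if n = i then y i else 0)"
      by (intro sum.cong) (auto simp: unitvec_def)
    then show ?thesis using that N by (auto simp: sum.delta')
  qed
  then have "A x = (\<lambda>n. \<Sum>i<N. (of_real s * proj C x i) * unitvec i n)" if "x \<in> l2" for x
    unfolding A[OF that] by (simp add: proj_def)
  then show ?thesis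
    unfolding finite_rank_def by (intro exI[of _ N] exI[of _ unitvec] ballI exI)
qed

lemma trace_op_eq_card:
  assumes "finite C" and "\<And>n. A (unitvec n) n = (if n \<in> C then a else 0)"
  shows "trace_op A = of_nat (card C) * a"
proof -
  have "trace_op A = (\<Sum>n\<in>C. A (unitvec n) n)"
    unfolding trace_op_def by (rule suminf_finite) (use assms in auto)
  also have "\<dots> = of_nat (card C) * a" using assms(2) by simp
  finally show ?thesis .
qed

lemma curvature_eventually_const:
  assumes "\<And>t. eventually (\<lambda>r. curv_integrand T (cis t) r = of_real k) (at_left 1)"
  shows "curvature_defined T" "curvature T = of_real k"
proof -
  have lim: "((\<lambda>r. curv_integrand T (cis t) r) \<longlongrightarrow> of_real k) (at_left 1)" for t
    by (rule tendsto_eventually[OF assms])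
  then show "curvature_defined T"
    unfolding curvature_defined_def by (intro exI[of _ "\<lambda>_. of_real k"] exI[of _ "{}"]) auto
  have "(\<lambda>t. Lim (at_left 1) (\<lambda>r. curv_integrand T (cis t) r)) = (\<lambda>t. of_real k)"
    using lim by (intro ext tendsto_Lim) simp_all
  then show "curvature T = of_real k"
    unfolding curvature_def by (simp add: content_real scaleR_conv_of_real)
qed

section \<open>A weighted bilateral shift\<close>

text \<open>The coordinates are indexed by the integers through \<open>int_encode\<close>.\<close>
definition zshift :: "int \<Rightarrow> nat \<Rightarrow> nat" where
  "zshift j n = int_encode (int_decode n + j)"

definition block :: "nat \<Rightarrow> nat set" where
  "block m = int_encode ` {0..<int m}"

definition block_weight :: "nat \<Rightarrow> real \<Rightarrow> nat \<Rightarrow> complex" where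
  "block_weight m c n = (if - int m \<le> int_decode n \<and> int_decode n < 0 then of_real c else 1)"

text \<open>In integer coordinates \<open>T e\<^sub>i = w\<^sub>i e\<^sub>i\<^sub>+\<^sub>m\<close> with \<open>w\<^sub>i = c\<close> for \<open>-m \<le> i < 0\<close>
  and \<open>w\<^sub>i = 1\<close> otherwise.\<close>
definition block_shift :: "nat \<Rightarrow> real \<Rightarrow> op" where
  "block_shift m c = wcomp (\<lambda>n. block_weight m c (zshift (- int m) n)) (zshift (- int m))"

lemma int_decode_zshift [simp]: "int_decode (zshift j n) = int_decode n + j"
  by (simp add: zshift_def)

lemma zshift_zshift [simp]: "zshift i (zshift j n) = zshift (j + i) n"
  by (simp add: zshift_def add.assoc)

lemma zshift_0 [simp]: "zshift 0 n = n"
  by (simp add: zshift_def)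

lemma funpow_zshift: "(zshift j ^^ k) n = zshift (int k * j) n"
  by (induction k) (simp_all add: algebra_simps)

lemma zshift_eq_iff: "zshift j n = n' \<longleftrightarrow> int_decode n + j = int_decode n'"
  unfolding zshift_def by (metis int_decode_inverse int_encode_inverse)

lemma inj_zshift: "inj (zshift j)"
  by (rule injI) (simp add: zshift_eq_iff int_decode_eq)

lemma finite_block: "finite (block m)"
  by (simp add: block_def)

lemma card_block: "card (block m) = m"
  unfolding block_def by (simp add: card_image inj_int_encode)

lemma mem_block_iff: "n \<in> block m \<longleftrightarrow> 0 \<le> int_decode n \<and> int_decode n < int m"
  unfolding block_def by (metis atLeastLessThan_iff image_iff int_decode_inverse int_encode_inverse)

lemma orbit_weight_forward:
  assumes "0 \<le> int_decode n"
  shows "orbit_weight (block_weight m c) (zshift (int m)) k n = 1"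
  unfolding orbit_weight_def funpow_zshift
proof (intro prod.neutral ballI)
  fix i
  have "0 \<le> int_decode n + int i * int m" by (intro add_nonneg_nonneg assms) simp
  then show "block_weight m c (zshift (int i * int m) n) = 1"
    by (simp add: block_weight_def)
qed

lemma orbit_weight_backward:
  assumes "0 \<le> int_decode n"
  shows "orbit_weight (\<lambda>n. block_weight m c (zshift (- int m) n)) (zshift (- int m)) k
           (zshift (int k * int m) n) = 1"
  unfolding orbit_weight_def funpow_zshift
proof (intro prod.neutral ballI)
  fix i assume "i \<in> {..<k}"
  then have "(int i + 1) * int m \<le> int k * int m" by (intro mult_right_mono) auto
  with assms show "block_weight m c (zshift (- int m) (zshift (int i * - int m) (zshift (int k * int m) n))) = 1"
    by (simp add: block_weight_def algebra_simps)
qed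

lemma neumann_backward_unitvec:
  assumes "n \<in> block m"
  shows "neumann \<mu> (\<lambda>n. block_weight m c (zshift (- int m) n)) (zshift (- int m)) (unitvec n)
           (zshift (int k * int m) n) = \<mu>^k"
proof -
  have "0 < m" "0 \<le> int_decode n" using assms by (auto simp: mem_block_iff)
  then have hit: "(zshift (- int m) ^^ k') (zshift (int k * int m) n) = n \<longleftrightarrow> k' = k" for k'
    by (auto simp: funpow_zshift zshift_eq_iff algebra_simps)
  have "neumann \<mu> (\<lambda>n. block_weight m c (zshift (- int m) n)) (zshift (- int m)) (unitvec n)
           (zshift (int k * int m) n) =
      (\<Sum>k'\<in>{k}. \<mu>^k' * orbit_weight (\<lambda>n. block_weight m c (zshift (- int m) n)) (zshift (- int m)) k'
           (zshift (int k * int m) n) * unitvec n ((zshift (- int m) ^^ k') (zshift (int k * int m) n)))"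
    unfolding neumann_def by (rule suminf_finite) (auto simp: unitvec_def hit)
  also have "\<dots> = \<mu>^k"
    using orbit_weight_backward[OF \<open>0 \<le> int_decode n\<close>] hit by (simp add: unitvec_def)
  finally show ?thesis .
qed

lemma neumann_forward_backward_unitvec:
  assumes "n \<in> block m"
  shows "neumann \<mu>\<^sub>1 (block_weight m c) (zshift (int m))
           (neumann \<mu>\<^sub>2 (\<lambda>n. block_weight m c (zshift (- int m) n)) (zshift (- int m)) (unitvec n)) n =
         (\<Sum>k. (\<mu>\<^sub>1 * \<mu>\<^sub>2)^k)"
proof -
  have "0 \<le> int_decode n" using assms by (simp add: mem_block_iff)
  then show ?thesis
    unfolding neumann_def[of \<mu>\<^sub>1] funpow_zshift orbit_weight_forward[OF \<open>0 \<le> int_decode n\<close>]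
    using neumann_backward_unitvec[OF assms] by (simp add: power_mult_distrib)
qed

locale block_shift_params =
  fixes m :: nat and c s :: real
  assumes c: "0 \<le> c" "c \<le> 1" and s: "0 \<le> s" "s \<le> 1" and pythagoras: "s\<^sup>2 + c\<^sup>2 = 1"
begin

abbreviation T where "T \<equiv> block_shift m c"

lemma norm_block_weight_le: "cmod (block_weight m c n) \<le> 1"
  using c by (simp add: block_weight_def)

lemma cnj_block_weight [simp]: "cnj (block_weight m c n) = block_weight m c n"
  by (simp add: block_weight_def)

lemma contraction_block_shift: "is_contraction T"
  unfolding block_shift_def by (intro contraction_wcomp inj_zshift norm_block_weight_le)

lemma adj_block_shift:
  assumes "y \<in> l2"
  shows "adj T y = wcomp (block_weight m c) (zshift (int m)) y"
proof -
  have "adj T y = wcomp (\<lambda>n. cnj (block_weight m c (zshift (- int m) (zshift (int m) n)))) (zshift (int m)) y"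
    unfolding block_shift_def
    by (rule adj_wcomp[where p="zshift (- int m)"]) (simp_all add: norm_block_weight_le assms)
  then show ?thesis by simp
qed

lemma defect_block_shift: "x \<in> l2 \<Longrightarrow> defect T x = (\<lambda>n. of_real s * proj (block m) x n)"
proof (rule defect_eq_scaled_proj[OF s])
  fix x assume x: "x \<in> l2"
  have "y - of_real c * (of_real c * y) = of_real s * of_real s * y" for y :: complex
  proof -
    have "s * s = 1 - c * c" using pythagoras by (simp add: power2_eq_square algebra_simps)
    then have "(of_real s * of_real s :: complex) = 1 - of_real c * of_real c"
      by (metis of_real_1 of_real_diff of_real_mult)
    then show ?thesis by (simp add: left_diff_distrib mult.assoc[symmetric])
  qed
  then show "(\<lambda>n. x n - T (adj T x) n) = (\<lambda>n. (of_real s)\<^sup>2 * proj (block m) x n)"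
    unfolding adj_block_shift[OF x] unfolding block_shift_def wcomp_def
    by (auto simp: fun_eq_iff proj_def block_weight_def mem_block_iff power2_eq_square)
qed

lemma finite_rank_defect_block_shift: "finite_rank (defect T)"
  by (rule finite_rank_scaled_proj[OF finite_block defect_block_shift])

lemma adj_block_shift_unitvec:
  assumes "int_decode j < 0"
  shows "adj T (unitvec j) = unitvec (zshift (- int m) j)"
proof -
  have "adj T (unitvec j) = (\<lambda>n. block_weight m c (zshift (- int m) j) * unitvec (zshift (- int m) j) n)"
    unfolding adj_block_shift[OF unitvec_l2] by (rule wcomp_unitvec) simp_all
  then show ?thesis using assms by (simp add: block_weight_def)
qed

lemma not_pure_block_shift: "\<not> pure T"
proof
  define j where "j = int_encode (- 1)"
  have "(adj T ^^ k) (unitvec j) = unitvec ((zshift (- int m) ^^ k) j)" for k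
  proof (induction k)
    case (Suc k)
    have "0 \<le> int k * int m" by simp
    then have "int_decode ((zshift (- int m) ^^ k) j) < 0"
      unfolding j_def funpow_zshift int_decode_zshift int_encode_inverse by linarith
    then show ?case using Suc by (simp add: adj_block_shift_unitvec)
  qed simp
  then have "(\<lambda>k. l2norm ((adj T ^^ k) (unitvec j))) = (\<lambda>k. 1)"
    by (simp add: l2norm_unitvec)
  moreover assume "pure T"
  then have "(\<lambda>k. l2norm ((adj T ^^ k) (unitvec j))) \<longlonglongrightarrow> 0"
    unfolding pure_def using unitvec_l2 by blast
  ultimately show False by (simp add: LIMSEQ_const_iff)
qed

lemma op_inv_forward_block_shift:
  assumes "cmod \<mu> < 1" and "x \<in> l2"
  shows "op_inv (\<lambda>x n. x n - \<mu> * adj T x n) x = neumann \<mu> (block_weight m c) (zshift (int m)) x"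
proof -
  interpret neumann_series \<mu> "block_weight m c" "zshift (int m)"
    by unfold_locales (simp_all add: assms inj_zshift norm_block_weight_le)
  show ?thesis by (rule op_inv_eq_neumann[OF _ assms(2)]) (simp add: adj_block_shift)
qed

lemma op_inv_backward_block_shift:
  assumes "cmod \<mu> < 1" and "x \<in> l2"
  shows "op_inv (\<lambda>x n. x n - \<mu> * T x n) x =
           neumann \<mu> (\<lambda>n. block_weight m c (zshift (- int m) n)) (zshift (- int m)) x"
proof -
  interpret neumann_series \<mu> "\<lambda>n. block_weight m c (zshift (- int m) n)" "zshift (- int m)"
    by unfold_locales (simp_all add: assms inj_zshift norm_block_weight_le)
  show ?thesis by (rule op_inv_eq_neumann[OF _ assms(2)]) (simp add: block_shift_def)
qed

lemma resolvent_diagonal_block_shift: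
  assumes \<mu>\<^sub>1: "cmod \<mu>\<^sub>1 < 1" and \<mu>\<^sub>2: "cmod \<mu>\<^sub>2 < 1"
  defines "R\<^sub>1 \<equiv> op_inv (\<lambda>x n. x n - \<mu>\<^sub>1 * adj T x n)" and "R\<^sub>2 \<equiv> op_inv (\<lambda>x n. x n - \<mu>\<^sub>2 * T x n)"
  shows "defect T (R\<^sub>1 (R\<^sub>2 (defect T (unitvec n)))) n =
           (if n \<in> block m then (of_real s)\<^sup>2 * (\<Sum>k. (\<mu>\<^sub>1 * \<mu>\<^sub>2)^k) else 0)"
proof -
  interpret forward: neumann_series \<mu>\<^sub>1 "block_weight m c" "zshift (int m)"
    by unfold_locales (simp_all add: \<mu>\<^sub>1 inj_zshift norm_block_weight_le)
  interpret backward: neumann_series \<mu>\<^sub>2 "\<lambda>n. block_weight m c (zshift (- int m) n)" "zshift (- int m)"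
    by unfold_locales (simp_all add: \<mu>\<^sub>2 inj_zshift norm_block_weight_le)
  note R = op_inv_forward_block_shift[OF \<mu>\<^sub>1] op_inv_backward_block_shift[OF \<mu>\<^sub>2]
  define w where "w = neumann \<mu>\<^sub>1 (block_weight m c) (zshift (int m))
    (neumann \<mu>\<^sub>2 (\<lambda>n. block_weight m c (zshift (- int m) n)) (zshift (- int m)) (unitvec n))"
  have w: "w \<in> l2" unfolding w_def by (intro forward.neumann_l2(1) backward.neumann_l2(1) unitvec_l2)
  show ?thesis
  proof (cases "n \<in> block m")
    case True
    then have "defect T (unitvec n) = (\<lambda>k. of_real s * unitvec n k)"
      unfolding defect_block_shift[OF unitvec_l2] by (auto simp: proj_def unitvec_def)
    then have "R\<^sub>1 (R\<^sub>2 (defect T (unitvec n))) = (\<lambda>k. of_real s * w k)"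
      by (simp add: R R\<^sub>1_def R\<^sub>2_def w_def l2_scale unitvec_l2 backward.neumann_l2
          backward.bdd_op_neumann forward.bdd_op_neumann bdd_op_scale)
    then have "defect T (R\<^sub>1 (R\<^sub>2 (defect T (unitvec n)))) n = of_real s * (of_real s * w n)"
      using True by (simp add: defect_block_shift[OF l2_scale[OF w]] proj_def)
    then show ?thesis
      using True neumann_forward_backward_unitvec[OF True] by (simp add: w_def power2_eq_square)
  next
    case False
    have "defect T (unitvec n) \<in> l2"
      unfolding defect_block_shift[OF unitvec_l2] by (intro l2_scale proj_l2 unitvec_l2)
    then have "R\<^sub>1 (R\<^sub>2 (defect T (unitvec n))) \<in> l2"
      by (simp add: R R\<^sub>1_def R\<^sub>2_def forward.neumann_l2 backward.neumann_l2)
    then show ?thesis using False by (simp add: defect_block_shift proj_def)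
  qed
qed

lemma curv_integrand_block_shift:
  assumes r: "0 < r" "r < 1" and z: "cmod z = 1"
  shows "curv_integrand T z r = of_real (real m * s\<^sup>2)"
proof -
  define \<mu>\<^sub>1 where "\<mu>\<^sub>1 = of_real r * z"
  define \<mu>\<^sub>2 where "\<mu>\<^sub>2 = of_real r * cnj z"
  have radius: "cmod \<mu>\<^sub>1 < 1" "cmod \<mu>\<^sub>2 < 1" using r z by (simp_all add: \<mu>\<^sub>1_def \<mu>\<^sub>2_def norm_mult)
  have "\<mu>\<^sub>1 * \<mu>\<^sub>2 = of_real (r\<^sup>2)"
    using complex_norm_square[of z] z by (simp add: \<mu>\<^sub>1_def \<mu>\<^sub>2_def power2_eq_square mult_ac)
  moreover have "r\<^sup>2 < 1" using r by (simp add: power_less_one_iff abs_square_less_1)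
  ultimately have geometric: "(\<Sum>k. (\<mu>\<^sub>1 * \<mu>\<^sub>2)^k) = 1 / (1 - of_real (r\<^sup>2))"
    using suminf_geometric[of "of_real (r\<^sup>2) :: complex"] r by (simp add: norm_power)
  have "curv_integrand T z r = of_real (1 - r\<^sup>2) * (of_nat m * ((of_real s)\<^sup>2 * (\<Sum>k. (\<mu>\<^sub>1 * \<mu>\<^sub>2)^k)))"
    unfolding curv_integrand_def Let_def \<mu>\<^sub>1_def[symmetric] \<mu>\<^sub>2_def[symmetric]
    by (subst trace_op_eq_card[where A="\<lambda>x. defect T (op_inv (\<lambda>x n. x n - \<mu>\<^sub>1 * adj T x n)
            (op_inv (\<lambda>x n. x n - \<mu>\<^sub>2 * T x n) (defect T x)))",
          OF finite_block resolvent_diagonal_block_shift[OF radius]])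
      (simp add: card_block)
  moreover have "(of_real r :: complex)\<^sup>2 \<noteq> 1"
    using \<open>r\<^sup>2 < 1\<close> by (metis of_real_1 of_real_eq_iff of_real_power less_irrefl)
  ultimately show ?thesis unfolding geometric by simp
qed

lemma curvature_block_shift:
  "curvature_defined T" "curvature T = of_real (real m * s\<^sup>2)"
proof -
  have "eventually (\<lambda>r. r \<in> {0<..<1}) (at_left (1::real))"
    by (rule eventually_at_left_real) simp
  then have "eventually (\<lambda>r. curv_integrand T (cis t) r = of_real (real m * s\<^sup>2)) (at_left 1)" for t
    by (rule eventually_mono) (simp add: curv_integrand_block_shift)
  then show "curvature_defined T" "curvature T = of_real (real m * s\<^sup>2)"
    by (rule curvature_eventually_const)+
qed

end

lemma exists_non_pure_contraction_with_curvature: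
  assumes "0 \<le> \<kappa>"
  shows "\<exists>T. is_contraction T \<and> finite_rank (defect T) \<and> \<not> pure T \<and>
           curvature_defined T \<and> curvature T = of_real \<kappa>"
proof -
  define m where "m = nat \<lceil>\<kappa>\<rceil> + 1"
  have "0 < m" "\<kappa> \<le> real m" unfolding m_def using assms by linarith+
  then have ratio: "0 \<le> \<kappa> / m" "\<kappa> / m \<le> 1" using assms by simp_all
  interpret block_shift_params m "sqrt (1 - \<kappa> / m)" "sqrt (\<kappa> / m)"
    by unfold_locales (use ratio in simp_all)
  have "real m * (sqrt (\<kappa> / m))\<^sup>2 = \<kappa>" using ratio \<open>0 < m\<close> by simp
  then have "curvature T = of_real \<kappa>" using curvature_block_shift(2) by simp
  then show ?thesis
    using contraction_block_shift finite_rank_defect_block_shift not_pure_block_shift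
      curvature_block_shift(1) by blast
qed

theorem mainTheorem10:
  shows "(\<forall>\<kappa>::real. \<kappa> \<ge> 0 \<longrightarrow>
           (\<exists>T. is_contraction T \<and> finite_rank (defect T) \<and>
                curvature_defined T \<and> curvature T = complex_of_real \<kappa>))
       \<and> (\<exists>T. is_contraction T \<and> finite_rank (defect T) \<and> \<not> pure T \<and>
                curvature_defined T \<and> (\<forall>n::int. curvature T \<noteq> of_int n))"
proof (intro conjI allI impI)
  show "\<exists>T. is_contraction T \<and> finite_rank (defect T) \<and>
          curvature_defined T \<and> curvature T = complex_of_real \<kappa>" if "\<kappa> \<ge> 0" for \<kappa> :: real
    using exists_non_pure_contraction_with_curvature[OF that] by blast
  obtain T where T: "is_contraction T" "finite_rank (defect T)" "\<not> pure T"
      "curvature_defined T" "curvature T = of_real (1 / 2)"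
    using exists_non_pure_contraction_with_curvature[of "1 / 2"] by auto
  have "curvature T \<noteq> of_int n" for n :: int
  proof
    assume "curvature T = of_int n"
    then have "complex_of_real (1 / 2) = complex_of_real (of_int n)" using T(5) by simp
    then have "(1 / 2 :: real) = of_int n" by (simp only: of_real_eq_iff)
    then have "1 = 2 * n" by linarith
    then show False by presburger
  qed
  with T show "\<exists>T. is_contraction T \<and> finite_rank (defect T) \<and> \<not> pure T \<and>
      curvature_defined T \<and> (\<forall>n::int. curvature T \<noteq> of_int n)" by blast
qed

end
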